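(* Let $R$ be a tree and let $X\subseteq V(R)$ with $|X|=n$ even. Call a partition $\{X_1,\dots,X_{n/2}\}$ of $X$ into sets of size two feasible if there are $n/2$ pairwise vertex-disjoint paths $P_1,\dots,P_{n/2}$ of $R$ such that for each $i$ the ends of $P_i$ are the two members of $X_i$. Then there is at most one feasible partition of $X$. *)

theory Defs
  imports Main "HOL-Library.Disjoint_Sets"
begin

definition simple_graph :: "'a set \<Rightarrow> ('a \<Rightarrow> 'a \<Rightarrow> bool) \<Rightarrow> bool" where
  "simple_graph V E \<longleftrightarrow> finite V \<and> (\<forall>x y. E x y \<longrightarrow> x \<in> V \<and> y \<in> V)
     \<and> (\<forall>x y. E x y \<longrightarrow> E y x) \<and> (\<forall>x. \<not> E x x)"

definition is_path :: "'a set \<Rightarrow> ('a \<Rightarrow> 'a \<Rightarrow> bool) \<Rightarrow> 'a list \<Rightarrow> bool" where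
  "is_path V E p \<longleftrightarrow> p \<noteq> [] \<and> distinct p \<and> set p \<subseteq> V
     \<and> (\<forall>i. Suc i < length p \<longrightarrow> E (p ! i) (p ! Suc i))"

definition graph_connected :: "'a set \<Rightarrow> ('a \<Rightarrow> 'a \<Rightarrow> bool) \<Rightarrow> bool" where
  "graph_connected V E \<longleftrightarrow> (\<forall>x\<in>V. \<forall>y\<in>V. \<exists>p. is_path V E p \<and> hd p = x \<and> last p = y)"

definition has_cycle :: "'a set \<Rightarrow> ('a \<Rightarrow> 'a \<Rightarrow> bool) \<Rightarrow> bool" where
  "has_cycle V E \<longleftrightarrow> (\<exists>c. is_path V E c \<and> length c \<ge> 3 \<and> E (last c) (hd c))"

definition is_tree :: "'a set \<Rightarrow> ('a \<Rightarrow> 'a \<Rightarrow> bool) \<Rightarrow> bool" where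
  "is_tree V E \<longleftrightarrow> simple_graph V E \<and> V \<noteq> {} \<and> graph_connected V E \<and> \<not> has_cycle V E"

definition pair_partition :: "'a set \<Rightarrow> 'a set set \<Rightarrow> bool" where
  "pair_partition X P \<longleftrightarrow> partition_on X P \<and> (\<forall>B\<in>P. card B = 2)"

definition feasible :: "'a set \<Rightarrow> ('a \<Rightarrow> 'a \<Rightarrow> bool) \<Rightarrow> 'a set \<Rightarrow> 'a set set \<Rightarrow> bool" where
  "feasible V E X P \<longleftrightarrow> pair_partition X P \<and>
     (\<exists>path. (\<forall>B\<in>P. is_path V E (path B) \<and> {hd (path B), last (path B)} = B)
       \<and> (\<forall>B\<in>P. \<forall>C\<in>P. B \<noteq> C \<longrightarrow> set (path B) \<inter> set (path C) = {}))"

end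

(*
  Induction on the number of vertices, removing a leaf v with neighbour u. A linking path
  can only end at v, never pass through it. If v is not in X, no path meets v and v can be
  deleted. If v and u are both in X, the path starting at v continues through u, which is an
  end of its own path; by disjointness {v, u} is a pair of every feasible partition. Otherwise
  the path from v to its partner a continues through u, and replacing {v, a} by {u, a} gives a
  feasible partition of X - {v} + {u} in the forest without v, from which the original
  partition is read off.
*)
theory Submission
  imports Defs
begin

definition delete_vertex :: "('a \<Rightarrow> 'a \<Rightarrow> bool) \<Rightarrow> 'a \<Rightarrow> 'a \<Rightarrow> 'a \<Rightarrow> bool" where
  "delete_vertex E v x y \<longleftrightarrow> E x y \<and> x \<noteq> v \<and> y \<noteq> v"

definition pendant :: "('a \<Rightarrow> 'a \<Rightarrow> bool) \<Rightarrow> 'a \<Rightarrow> 'a \<Rightarrow> bool" where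
  "pendant E v u \<longleftrightarrow> E v u \<and> (\<forall>y. E v y \<longrightarrow> y = u)"

definition linkage :: "'a set \<Rightarrow> ('a \<Rightarrow> 'a \<Rightarrow> bool) \<Rightarrow> 'a set set \<Rightarrow> ('a set \<Rightarrow> 'a list) \<Rightarrow> bool" where
  "linkage V E P f \<longleftrightarrow> (\<forall>B\<in>P. is_path V E (f B) \<and> {hd (f B), last (f B)} = B)
     \<and> (\<forall>B\<in>P. \<forall>C\<in>P. B \<noteq> C \<longrightarrow> set (f B) \<inter> set (f C) = {})"

lemma feasible_iff_linkage: "feasible V E X P \<longleftrightarrow> pair_partition X P \<and> (\<exists>f. linkage V E P f)"
  unfolding feasible_def linkage_def ..

lemma symp_if_simple_graph: "simple_graph V E \<Longrightarrow> symp E"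
  by (simp add: simple_graph_def symp_def)

lemma is_path_delete_vertex_iff:
  "is_path (V - {v}) (delete_vertex E v) p \<longleftrightarrow> is_path V E p \<and> v \<notin> set p"
  by (auto simp: is_path_def delete_vertex_def)

lemma is_path_drop:
  assumes "is_path V E p" "j < length p"
  shows "is_path V E (drop j p)"
  unfolding is_path_def
proof (intro conjI allI impI)
  fix i assume i: "Suc i < length (drop j p)"
  then have "E (p ! (j + i)) (p ! Suc (j + i))"
    using assms(1) unfolding is_path_def by simp
  then show "E (drop j p ! i) (drop j p ! Suc i)"
    using i by simp
qed (use assms in \<open>auto simp: is_path_def dest: in_set_dropD\<close>)

lemma is_path_rev:
  assumes "is_path V E p" "symp E"
  shows "is_path V E (rev p)"
  unfolding is_path_def
proof (intro conjI allI impI)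
  fix i assume i: "Suc i < length (rev p)"
  define k where "k = length p - Suc (Suc i)"
  have "E (p ! k) (p ! Suc k)"
    using assms(1) i unfolding is_path_def k_def by auto
  moreover have "rev p ! i = p ! Suc k" "rev p ! Suc i = p ! k"
    using i by (auto simp: rev_nth k_def Suc_diff_Suc)
  ultimately show "E (rev p ! i) (rev p ! Suc i)"
    using assms(2) by (simp add: sympD)
qed (use assms in \<open>auto simp: is_path_def\<close>)

lemma is_path_snoc:
  assumes "is_path V E p" "E (last p) z" "z \<in> V" "z \<notin> set p"
  shows "is_path V E (p @ [z])"
  unfolding is_path_def
proof (intro conjI allI impI)
  fix i assume i: "Suc i < length (p @ [z])"
  have "p \<noteq> []"
    using assms(1) by (simp add: is_path_def)
  show "E ((p @ [z]) ! i) ((p @ [z]) ! Suc i)"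
  proof (cases "Suc i < length p")
    case True
    then show ?thesis
      using assms(1) by (simp add: is_path_def nth_append)
  next
    case False
    with i have "i = length p - 1"
      by simp
    then show ?thesis
      using assms(2) \<open>p \<noteq> []\<close> by (simp add: nth_append last_conv_nth)
  qed
qed (use assms in \<open>auto simp: is_path_def\<close>)

lemma pendant_in_path_is_end:
  assumes "is_path V E p" "symp E" "pendant E v u" "v \<in> set p"
  shows "v = hd p \<or> v = last p"
proof (rule ccontr)
  assume not_end: "\<not> ?thesis"
  obtain i where i: "i < length p" "p ! i = v"
    using assms(4) by (meson in_set_conv_nth)
  have "p \<noteq> []"
    using assms(4) by auto
  with not_end i have "i \<noteq> 0" "i \<noteq> length p - 1"
    by (metis hd_conv_nth, metis last_conv_nth)
  with i have "Suc (i - 1) = i" "Suc i < length p"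
    by auto
  then have "E (p ! (i - 1)) v" "E v (p ! Suc i)"
    using assms(1) i unfolding is_path_def by (metis Suc_lessD)+
  then have "E v (p ! (i - 1))" "E v (p ! Suc i)"
    using assms(2) by (auto intro: sympD)
  then have "p ! (i - 1) = u" "p ! Suc i = u"
    using assms(3) by (auto simp: pendant_def)
  moreover have "distinct p"
    using assms(1) by (simp add: is_path_def)
  ultimately have "i - 1 = Suc i"
    using \<open>Suc i < length p\<close> by (metis nth_eq_iff_index_eq less_imp_diff_less Suc_lessD)
  then show False by simp
qed

lemma is_path_tl_from_pendant:
  assumes "is_path V E p" "hd p = v" "hd p \<noteq> last p" "pendant E v u"
  shows "is_path V E (tl p)" "hd (tl p) = u" "last (tl p) = last p"
proof -
  obtain q where p: "p = v # q" and "q \<noteq> []"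
    using assms(1-3) unfolding is_path_def by (cases p) (auto split: if_splits)
  then have "E v (hd q)"
    using assms(1) unfolding is_path_def by (metis hd_conv_nth length_Cons length_greater_0_conv
        Suc_less_eq nth_Cons_0 nth_Cons_Suc)
  then show "hd (tl p) = u"
    using assms(4) p by (simp add: pendant_def)
  show "is_path V E (tl p)"
    using is_path_drop[OF assms(1), of 1] p \<open>q \<noteq> []\<close> by simp
  show "last (tl p) = last p"
    using p \<open>q \<noteq> []\<close> by simp
qed

lemma simple_graph_delete_vertex:
  "simple_graph V E \<Longrightarrow> simple_graph (V - {v}) (delete_vertex E v)"
  by (auto simp: simple_graph_def delete_vertex_def)

lemma has_cycle_delete_vertex:
  "has_cycle (V - {v}) (delete_vertex E v) \<Longrightarrow> has_cycle V E"
  unfolding has_cycle_def is_path_delete_vertex_iff by (auto simp: delete_vertex_def)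

lemma has_cycle_if_chord:
  assumes "is_path V E p" "j + 3 \<le> length p" "E (last p) (p ! j)"
  shows "has_cycle V E"
proof -
  have "is_path V E (drop j p)" "length (drop j p) \<ge> 3"
    using assms(1,2) is_path_drop[of V E p j] by auto
  moreover have "hd (drop j p) = p ! j" "last (drop j p) = last p"
    using assms(2) by (auto simp: hd_drop_conv_nth)
  ultimately show ?thesis
    using assms(3) unfolding has_cycle_def by metis
qed

lemma longest_path_exists:
  assumes "finite V" "is_path V E p0"
  obtains p where "is_path V E p" "\<And>q. is_path V E q \<Longrightarrow> length q \<le> length p"
proof -
  have "length q < Suc (card V)" if "is_path V E q" for q
  proof -
    have "length q = card (set q)"
      using that by (simp add: is_path_def distinct_card)
    also have "\<dots> \<le> card V"
      using that assms(1) by (intro card_mono) (auto simp: is_path_def)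
    finally show ?thesis by simp
  qed
  then show ?thesis
    using that ex_has_greatest_nat[of "is_path V E" p0 length "Suc (card V)"] assms(2) by blast
qed

text \<open>The last vertex of a longest path is a pendant: a neighbour off the path would extend it,
  a neighbour on the path other than its predecessor would close a cycle.\<close>
lemma pendant_exists:
  assumes "simple_graph V E" "\<not> has_cycle V E" "E x y"
  obtains v u where "v \<in> V" "pendant E v u"
proof -
  have sym: "symp E" and irrefl: "\<And>z. \<not> E z z" and fin: "finite V"
    and in_V: "\<And>z z'. E z z' \<Longrightarrow> z \<in> V \<and> z' \<in> V"
    using assms(1) by (auto simp: simple_graph_def symp_def)
  have "x \<noteq> y" "x \<in> V" "y \<in> V"
    using assms(3) irrefl in_V by auto
  then have "is_path V E [x, y]"
    using assms(3) unfolding is_path_def by (auto simp: less_Suc_eq)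
  then obtain p where p: "is_path V E p" and longest: "\<And>q. is_path V E q \<Longrightarrow> length q \<le> length p"
    using longest_path_exists[OF fin] by blast
  define n where "n = length p"
  define u where "u = p ! (n - 2)"
  have "n \<ge> 2"
    using longest[OF \<open>is_path V E [x, y]\<close>] by (simp add: n_def)
  have last_p: "last p = p ! (n - 1)"
    using \<open>n \<ge> 2\<close> last_conv_nth[of p] by (cases p) (auto simp: n_def)
  have "Suc (n - 2) = n - 1" "Suc (n - 2) < n"
    using \<open>n \<ge> 2\<close> by auto
  moreover have "E (p ! (n - 2)) (p ! Suc (n - 2))" if "Suc (n - 2) < n"
    using p that unfolding is_path_def n_def by blast
  ultimately have "E u (last p)"
    using last_p u_def by simp
  have "z = u" if "E (last p) z" for z
  proof (cases "z \<in> set p")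
    case False
    then have "is_path V E (p @ [z])"
      using is_path_snoc[OF p that] in_V[OF that] by simp
    then show ?thesis
      using longest[of "p @ [z]"] by simp
  next
    case True
    then obtain j where j: "j < n" "p ! j = z"
      by (auto simp: in_set_conv_nth n_def)
    have "j \<noteq> n - 1"
      using j that irrefl[of z] last_p by auto
    show ?thesis
    proof (rule ccontr)
      assume "z \<noteq> u"
      then have "j \<noteq> n - 2"
        using j u_def by auto
      with j \<open>j \<noteq> n - 1\<close> have "j + 3 \<le> length p"
        unfolding n_def by linarith
      then have "has_cycle V E"
        using has_cycle_if_chord[OF p] that j by simp
      then show False
        using assms(2) by contradiction
    qed
  qed
  then have "pendant E (last p) u"
    using sympD[OF sym \<open>E u (last p)\<close>] unfolding pendant_def by blast
  moreover have "last p \<in> V"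
    using in_V[OF \<open>E u (last p)\<close>] by simp
  ultimately show ?thesis
    using that by blast
qed

lemma pair_partition_Diff:
  assumes "pair_partition X P" "B \<in> P"
  shows "pair_partition (X - B) (P - {B})"
proof -
  have "disjnt B (\<Union>(P - {B}))"
    using assms unfolding pair_partition_def partition_on_def disjoint_def disjnt_def by blast
  moreover have "P = insert B (P - {B})"
    using assms(2) by blast
  ultimately show ?thesis
    using assms partition_on_insert[of B "P - {B}" X] unfolding pair_partition_def by auto
qed

lemma pair_partition_swap:
  assumes "pair_partition X P" "{v, a} \<in> P" "u \<notin> X"
  shows "pair_partition (insert u (X - {v})) (insert {u, a} (P - {{v, a}}))"
proof -
  have "a \<in> X" "v \<noteq> a"
    using assms(1,2) by (auto simp: pair_partition_def partition_on_def)
  have rest: "pair_partition (X - {v, a}) (P - {{v, a}})"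
    using pair_partition_Diff[OF assms(1,2)] .
  then have "disjnt {u, a} (\<Union>(P - {{v, a}}))"
    using assms(3) by (auto simp: pair_partition_def partition_on_def disjnt_def)
  moreover have "insert u (X - {v}) - {u, a} = X - {v, a}"
    using assms(3) by auto
  moreover have "u \<noteq> a"
    using assms(3) \<open>a \<in> X\<close> by auto
  then have "card {u, a} = 2"
    by simp
  ultimately show ?thesis
    using rest \<open>a \<in> X\<close> \<open>v \<noteq> a\<close> partition_on_insert[of "{u, a}" "P - {{v, a}}"]
    unfolding pair_partition_def by auto
qed

lemma linkageI:
  assumes "\<And>B. B \<in> P \<Longrightarrow> is_path V E (f B)" "\<And>B. B \<in> P \<Longrightarrow> {hd (f B), last (f B)} = B"
    "\<And>B C. B \<in> P \<Longrightarrow> C \<in> P \<Longrightarrow> B \<noteq> C \<Longrightarrow> set (f B) \<inter> set (f C) = {}"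
  shows "linkage V E P f"
  using assms by (simp add: linkage_def)

lemma linkage_subset: "linkage V E P f \<Longrightarrow> P' \<subseteq> P \<Longrightarrow> linkage V E P' f"
  unfolding linkage_def by blast

lemma linkage_disjoint:
  "linkage V E P f \<Longrightarrow> B \<in> P \<Longrightarrow> C \<in> P \<Longrightarrow> x \<in> set (f B) \<Longrightarrow> x \<in> set (f C) \<Longrightarrow> B = C"
  unfolding linkage_def by blast

lemma end_in_linkage_path:
  assumes "linkage V E P f" "B \<in> P" "x \<in> B"
  shows "x \<in> set (f B)"
proof -
  have "f B \<noteq> []" "{hd (f B), last (f B)} = B"
    using assms(1,2) by (auto simp: linkage_def is_path_def)
  then show ?thesis
    using assms(3) by (metis empty_iff hd_in_set insertE last_in_set)
qed

lemma linkage_delete_vertex: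
  assumes "linkage V E P f" "\<And>B. B \<in> P \<Longrightarrow> v \<notin> set (f B)"
  shows "linkage (V - {v}) (delete_vertex E v) P f"
  using assms unfolding linkage_def by (simp add: is_path_delete_vertex_iff)

lemma linkage_update:
  assumes "linkage V E P f" "B \<in> P" "is_path V E q" "{hd q, last q} = C"
    "set q \<subseteq> set (f B)" "C \<notin> P - {B}"
  shows "linkage V E (insert C (P - {B})) (f(C := q))"
proof (rule linkageI)
  let ?g = "f(C := q)"
  have old: "?g D = f D" if "D \<in> P - {B}" for D
    using assms(6) that by auto
  have new: "set q \<inter> set (f D) = {}" if "D \<in> P - {B}" for D
    using linkage_disjoint[OF assms(1,2), of D] assms(5) that by blast
  fix D assume D: "D \<in> insert C (P - {B})"
  show "is_path V E (?g D)" "{hd (?g D), last (?g D)} = D"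
    using D assms(1,3,4) old by (cases "D = C"; auto simp: linkage_def)+
  fix D' assume D': "D' \<in> insert C (P - {B})" and "D \<noteq> D'"
  show "set (?g D) \<inter> set (?g D') = {}"
  proof (cases "D = C")
    case True
    then have "D' \<in> P - {B}"
      using D' \<open>D \<noteq> D'\<close> by auto
    then show ?thesis
      using True new[of D'] old[of D'] by simp
  next
    case False
    then have "D \<in> P - {B}"
      using D by auto
    show ?thesis
    proof (cases "D' = C")
      case True
      then show ?thesis
        using \<open>D \<in> P - {B}\<close> new[of D] old[of D] by auto
    next
      case False
      then have "D' \<in> P - {B}"
        using D' by auto
      then show ?thesis
        using \<open>D \<in> P - {B}\<close> \<open>D \<noteq> D'\<close> old linkage_disjoint[OF assms(1), of D D'] by auto
    qed
  qed
qed

lemma pendant_in_linkage_path_is_end: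
  assumes "linkage V E P f" "symp E" "pendant E v u" "B \<in> P" "v \<in> set (f B)"
  shows "v \<in> B"
proof -
  have "is_path V E (f B)" "{hd (f B), last (f B)} = B"
    using assms(1,4) by (auto simp: linkage_def)
  then show ?thesis
    using pendant_in_path_is_end[OF _ assms(2,3,5)] by auto
qed

lemma linkage_path_from_pendant:
  assumes "linkage V E P f" "symp E" "pendant E v u" "B \<in> P" "v \<in> B" "card B = 2"
  obtains a q where "B = {v, a}" "a \<noteq> v" "is_path V E q" "hd q = u" "last q = a"
    "set q \<subseteq> set (f B)"
proof -
  have path: "is_path V E (f B)" and ends: "{hd (f B), last (f B)} = B"
    using assms(1,4) by (auto simp: linkage_def)
  obtain h where h: "is_path V E h" "hd h = v" "B = {v, last h}" "set h = set (f B)"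
  proof (cases "hd (f B) = v")
    case True
    then show ?thesis
      using that[OF path True] ends by simp
  next
    case False
    have "v \<in> {hd (f B), last (f B)}"
      using ends assms(5) by simp
    with False have "last (f B) = v"
      by simp
    moreover have "f B \<noteq> []"
      using path by (simp add: is_path_def)
    ultimately have "hd (rev (f B)) = v" "{v, last (rev (f B))} = {hd (f B), last (f B)}"
      by (auto simp: hd_rev last_rev)
    then show ?thesis
      using that[OF is_path_rev[OF path assms(2)]] ends by simp
  qed
  have "last h \<noteq> v"
    using assms(6) unfolding h(3) by auto
  then have "hd h \<noteq> last h"
    using h(2) by simp
  note tl_h = is_path_tl_from_pendant[OF h(1,2) this assms(3)]
  have "set (tl h) \<subseteq> set (f B)"
    using h(4) by (metis list.set_sel(2) subsetI tl_Nil)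
  then show ?thesis
    using that[OF h(3) \<open>last h \<noteq> v\<close> tl_h(1,2)] tl_h(3) by simp
qed

lemma linkage_delete_pendant:
  assumes "linkage V E P f" "symp E" "pendant E v u" "v \<notin> \<Union>P"
  shows "linkage (V - {v}) (delete_vertex E v) P f"
  using linkage_delete_vertex[OF assms(1)] pendant_in_linkage_path_is_end[OF assms(1-3)] assms(4)
  by blast

lemma feasible_Union: "feasible V E X P \<Longrightarrow> \<Union>P = X"
  by (simp add: feasible_def pair_partition_def partition_on_def)

lemma feasible_pair_of_vertex:
  assumes "feasible V E X P" "x \<in> X"
  obtains B where "B \<in> P" "x \<in> B" "card B = 2"
  using assms by (auto simp: feasible_def pair_partition_def partition_on_def)

lemma feasible_delete_pendant_outside:
  assumes "feasible V E X P" "symp E" "pendant E v u" "v \<notin> X"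
  shows "feasible (V - {v}) (delete_vertex E v) X P"
proof -
  obtain f where pp: "pair_partition X P" and f: "linkage V E P f"
    using assms(1) by (auto simp: feasible_iff_linkage)
  have "v \<notin> \<Union>P"
    using feasible_Union[OF assms(1)] assms(4) by simp
  then show ?thesis
    using pp linkage_delete_pendant[OF f assms(2,3)] by (auto simp: feasible_iff_linkage)
qed

text \<open>If the neighbour u of a pendant vertex v is in X, the path leaving v runs through u,
  which is an end of its own path; so by disjointness v and u are paired.\<close>
lemma feasible_delete_pendant_pair:
  assumes "feasible V E X P" "simple_graph V E" "pendant E v u" "v \<in> X" "u \<in> X"
  shows "{v, u} \<in> P" "feasible (V - {v}) (delete_vertex E v) (X - {v, u}) (P - {{v, u}})"
proof -
  obtain f where pp: "pair_partition X P" and f: "linkage V E P f"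
    using assms(1) by (auto simp: feasible_iff_linkage)
  have sym: "symp E"
    using assms(2) by (rule symp_if_simple_graph)
  obtain B where B: "B \<in> P" "v \<in> B" "card B = 2"
    using feasible_pair_of_vertex[OF assms(1,4)] .
  obtain a q where q: "B = {v, a}" "is_path V E q" "hd q = u" "set q \<subseteq> set (f B)"
    using linkage_path_from_pendant[OF f sym assms(3) B] by metis
  have "u \<in> set (f B)"
    using q(2-4) by (auto simp: is_path_def)
  moreover obtain C where C: "C \<in> P" "u \<in> C"
    using feasible_pair_of_vertex[OF assms(1,5)] by metis
  ultimately have "u \<in> B"
    using linkage_disjoint[OF f B(1) C(1)] end_in_linkage_path[OF f C] by blast
  moreover have "u \<noteq> v"
    using assms(2,3) by (auto simp: simple_graph_def pendant_def)
  ultimately have "B = {v, u}"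
    using q(1) by auto
  then show "{v, u} \<in> P"
    using B(1) by simp
  have rest: "pair_partition (X - {v, u}) (P - {{v, u}})"
    using pair_partition_Diff[OF pp \<open>{v, u} \<in> P\<close>] .
  then have "v \<notin> \<Union>(P - {{v, u}})"
    by (auto simp: pair_partition_def partition_on_def)
  with linkage_subset[OF f] have "linkage (V - {v}) (delete_vertex E v) (P - {{v, u}}) f"
    using linkage_delete_pendant[OF _ sym assms(3)] by blast
  with rest show "feasible (V - {v}) (delete_vertex E v) (X - {v, u}) (P - {{v, u}})"
    by (auto simp: feasible_iff_linkage)
qed

text \<open>The path from v to its partner a runs through u, so dropping v links u to a.\<close>
lemma feasible_reroute_pendant:
  assumes "feasible V E X P" "symp E" "pendant E v u" "v \<in> X" "u \<notin> X"
  obtains a where "{v, a} \<in> P"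
    "feasible (V - {v}) (delete_vertex E v) (insert u (X - {v})) (insert {u, a} (P - {{v, a}}))"
proof -
  obtain f where pp: "pair_partition X P" and f: "linkage V E P f"
    using assms(1) by (auto simp: feasible_iff_linkage)
  obtain B where B: "B \<in> P" "v \<in> B" "card B = 2"
    using feasible_pair_of_vertex[OF assms(1,4)] .
  obtain a q where q: "B = {v, a}" "a \<noteq> v" "is_path V E q" "hd q = u" "last q = a"
    "set q \<subseteq> set (f B)"
    using linkage_path_from_pendant[OF f assms(2,3) B] .
  let ?P' = "insert {u, a} (P - {B})"
  have "u \<notin> \<Union>P"
    using feasible_Union[OF assms(1)] assms(5) by simp
  then have "{u, a} \<notin> P - {B}"
    by blast
  then have "linkage V E ?P' (f({u, a} := q))"
    using linkage_update[OF f B(1) q(3) _ q(6)] q(4,5) by simp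
  moreover have "\<Union>(P - {B}) = X - B"
    using pair_partition_Diff[OF pp B(1)] by (simp add: pair_partition_def partition_on_def)
  then have "v \<notin> \<Union>?P'"
    using B(2) q(2) assms(4,5) by auto
  ultimately have "linkage (V - {v}) (delete_vertex E v) ?P' (f({u, a} := q))"
    using linkage_delete_pendant[OF _ assms(2,3)] by blast
  moreover have "pair_partition (insert u (X - {v})) ?P'"
    using pair_partition_swap[OF pp _ assms(5)] B(1) q(1) by simp
  ultimately have "feasible (V - {v}) (delete_vertex E v) (insert u (X - {v})) ?P'"
    unfolding feasible_iff_linkage by blast
  then show ?thesis
    using that B(1) unfolding q(1) by blast
qed

lemma eq_if_swapped_pairs_eq:
  assumes "insert {u, a} (P - {{v, a}}) = insert {u, b} (Q - {{v, b}})"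
    "{v, a} \<in> P" "{v, b} \<in> Q" "u \<notin> \<Union>P" "u \<notin> \<Union>Q"
  shows "P = Q"
proof -
  have "{u, a} \<in> insert {u, b} (Q - {{v, b}})"
    using assms(1) by blast
  then have "{u, a} = {u, b}"
    using assms(5) by blast
  moreover have "a \<noteq> u"
    using assms(2,4) by blast
  ultimately have "a = b"
    by (metis doubleton_eq_iff)
  have "P - {{v, a}} = insert {u, a} (P - {{v, a}}) - {{u, a}}"
    using assms(4) by blast
  also have "\<dots> = Q - {{v, a}}"
    using assms(1,5) \<open>a = b\<close> by blast
  finally show ?thesis
    using assms(2,3) \<open>a = b\<close> by (metis insert_Diff)
qed

lemma feasible_no_edges:
  assumes "feasible V E X P" "\<And>x y. \<not> E x y"
  shows "P = {}"
proof (rule ccontr)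
  assume "P \<noteq> {}"
  then obtain B where "B \<in> P"
    by blast
  obtain f where "pair_partition X P" "linkage V E P f"
    using assms(1) by (auto simp: feasible_iff_linkage)
  then have "card {hd (f B), last (f B)} = 2" and path: "is_path V E (f B)"
    using \<open>B \<in> P\<close> by (auto simp: linkage_def pair_partition_def)
  then have "hd (f B) \<noteq> last (f B)"
    by auto
  moreover have "f B \<noteq> []"
    using path by (simp add: is_path_def)
  ultimately have "Suc 0 < length (f B)"
    by (cases "f B") auto
  then show False
    using path assms(2) unfolding is_path_def by blast
qed

lemma feasible_unique_in_forest:
  assumes "simple_graph V E" "\<not> has_cycle V E" "feasible V E X P" "feasible V E X Q"
  shows "P = Q"
  using assms
proof (induction "card V" arbitrary: V E X P Q rule: less_induct)
  case less
  show ?case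
  proof (cases "\<exists>x y. E x y")
    case False
    then show ?thesis
      using feasible_no_edges[OF less.prems(3)] feasible_no_edges[OF less.prems(4)] by blast
  next
    case True
    then obtain v u where "v \<in> V" and pendant: "pendant E v u"
      using pendant_exists[OF less.prems(1,2)] by blast
    have sym: "symp E"
      using less.prems(1) by (rule symp_if_simple_graph)
    have "finite V"
      using less.prems(1) by (simp add: simple_graph_def)
    then have smaller: "card (V - {v}) < card V"
      using \<open>v \<in> V\<close> by (rule card_Diff1_less)
    have simple: "simple_graph (V - {v}) (delete_vertex E v)"
      using less.prems(1) by (rule simple_graph_delete_vertex)
    have acyclic: "\<not> has_cycle (V - {v}) (delete_vertex E v)"
      using less.prems(2) has_cycle_delete_vertex by (rule contrapos_nn)
    have IH: "P' = Q'" if "feasible (V - {v}) (delete_vertex E v) X' P'"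
      "feasible (V - {v}) (delete_vertex E v) X' Q'" for X' P' Q'
      by (rule less.hyps[OF smaller simple acyclic that])
    consider "v \<notin> X" | "v \<in> X" "u \<in> X" | "v \<in> X" "u \<notin> X"
      by blast
    then show ?thesis
    proof cases
      case 1
      then show ?thesis
        using IH feasible_delete_pendant_outside[OF less.prems(3) sym pendant]
          feasible_delete_pendant_outside[OF less.prems(4) sym pendant] by blast
    next
      case 2
      note P = feasible_delete_pendant_pair[OF less.prems(3,1) pendant 2]
        and Q = feasible_delete_pendant_pair[OF less.prems(4,1) pendant 2]
      then show ?thesis
        using IH[OF P(2) Q(2)] by (metis insert_Diff)
    next
      case 3
      obtain a where a: "{v, a} \<in> P"
        "feasible (V - {v}) (delete_vertex E v) (insert u (X - {v})) (insert {u, a} (P - {{v, a}}))"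
        using feasible_reroute_pendant[OF less.prems(3) sym pendant 3] .
      obtain b where b: "{v, b} \<in> Q"
        "feasible (V - {v}) (delete_vertex E v) (insert u (X - {v})) (insert {u, b} (Q - {{v, b}}))"
        using feasible_reroute_pendant[OF less.prems(4) sym pendant 3] .
      have "u \<notin> \<Union>P" "u \<notin> \<Union>Q"
        using feasible_Union[OF less.prems(3)] feasible_Union[OF less.prems(4)] 3 by auto
      then show ?thesis
        using eq_if_swapped_pairs_eq[OF IH[OF a(2) b(2)] a(1) b(1)] by blast
    qed
  qed
qed

theorem mainTheorem3:
  fixes V :: "'a set" and E :: "'a \<Rightarrow> 'a \<Rightarrow> bool" and X :: "'a set"
  assumes "is_tree V E" and "X \<subseteq> V" and "even (card X)"
    and "feasible V E X P" and "feasible V E X Q"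
  shows "P = Q"
  using feasible_unique_in_forest assms(1,4,5) unfolding is_tree_def by blast

end
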